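(* For every choice of environment function $Env()$, ESAdapt under the reward function $Rew_{\#comp}()$ is unsolvable: there is no algorithm (Turing machine), regardless of running time or memory, that produces the correct output for every instance.
   Context: Model. Let $X=\{x_1,\dots,x_{|X|}\}$ be Boolean variables and $O$ a finite output set. Software system requirements are a finite set $R$ of pairs $(i,o)$, where $i$ is a truth assignment to $X$ and $o\in O$. Interfaces and components follow the Dana runtime component model: an interface is a set of function prototypes (function name, return type, parameter types) together with a set of typed transfer fields; a component provides one or more interfaces and requires zero or more interfaces, and contains code (in a Dana-like imperative language with assignments, conditionals, loops, arrays, function calls and an output statement; this language can simulate any Turing machine) implementing every function of its provided interfaces; this code may call functions and use transfer fields of its required interfaces. $L_{int}$ and $L_{comp}$ are finite libraries of interfaces and components. Given a base component $c\in L_{comp}$ implementing a function main, a valid component-based software system $S$ based on $c$ is obtained by choosing, for each required interface of $c$, a component of $L_{comp}$ providing it, and recursively for each required interface of every chosen component; separate copies of a component are used for separate required-interface occurrences, and when a component providing several interfaces implements one of them, only a reduced copy containing that interface's code is used. Its component wiring tree has root $c$, vertices the chosen component copies, arcs labelled by the implemented interfaces; no component label may occur twice on a root-to-leaf path. $S$ is working relative to $R$ if for every $(i,o)\in R$, running $S$ on input $i$ outputs $o$. An environment function $Env()$ maps a system to events/metric values and is computable in polynomial time. $Rew_{\#comp}(S)$ is the number of components in $S$. Problem ESAdapt under $Rew_{\#comp}()$: Input: $R$, $L_{int}$, $L_{comp}$, a working system $S$ based on a component $c\in L_{comp}$ relative to $R$, $L_{int}$, $L_{comp}$, and $Env()$.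 Output: a working system $S'$ based on $c$ relative to $L_{int},L_{comp},R$ having the smallest value of $Rew_{\#comp}(S')$ over all working systems based on $c$ relative to $L_{int},L_{comp},R$. *)

theory Defs
  imports Main "HOL-Library.Nat_Bijection"
begin

section \<open>A Dana-like imperative language\<close>

text \<open>All names (variables, arrays, functions, interfaces, components, types)
are natural numbers; all values are natural numbers.\<close>

datatype aexp = N nat | V nat | Plus aexp aexp | Minus aexp aexp | Times aexp aexp
  | Div aexp aexp | Mod aexp aexp | Arr nat aexp

datatype bexp = BC bool | Not bexp | And bexp bexp | Less aexp aexp | Eq aexp aexp

text \<open>Call x I f args: call function f of (required) interface I with
arguments args and store the returned value in variable x.  Out a: output statement.\<close>
datatype com = Skip | Assign nat aexp | ArrAssign nat aexp aexp | Seq com com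
  | If bexp com com | While bexp com | Call nat nat nat "aexp list" | Out aexp

type_synonym state = "(nat \<Rightarrow> nat) \<times> (nat \<Rightarrow> nat \<Rightarrow> nat)"

fun aval :: "aexp \<Rightarrow> state \<Rightarrow> nat" where
  "aval (N n) s = n"
| "aval (V x) s = fst s x"
| "aval (Plus a b) s = aval a s + aval b s"
| "aval (Minus a b) s = aval a s - aval b s"
| "aval (Times a b) s = aval a s * aval b s"
| "aval (Div a b) s = aval a s div aval b s"
| "aval (Mod a b) s = aval a s mod aval b s"
| "aval (Arr x i) s = snd s x (aval i s)"

fun bval :: "bexp \<Rightarrow> state \<Rightarrow> bool" where
  "bval (BC b) s = b"
| "bval (Not b) s = (\<not> bval b s)"
| "bval (And a b) s = (bval a s \<and> bval b s)"
| "bval (Less a b) s = (aval a s < aval b s)"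
| "bval (Eq a b) s = (aval a s = aval b s)"

section \<open>Interfaces, components, wiring trees\<close>

text \<open>An interface: name, function prototypes (function name, return type,
parameter types), typed transfer fields (field name, type).\<close>
datatype iface = Iface (iname: nat) (protos: "(nat \<times> nat \<times> nat list) list")
  (tfields: "(nat \<times> nat) list")

text \<open>An implementation of a function: parameter variables, body, returned expression.\<close>
type_synonym fimpl = "nat list \<times> com \<times> aexp"

text \<open>A component: name, provided interfaces, required interfaces, code
(implementation for each (interface, function name) pair).\<close>
datatype component = Comp (cname: nat) (prov: "nat list") (req: "nat list")
  (code: "((nat \<times> nat) \<times> fimpl) list")

text \<open>Component wiring tree: a vertex labelled by a component name, with arcs
labelled by the interface implemented by the child.\<close>
datatype wtree = WNode nat "(nat \<times> wtree) list"

fun root_label :: "wtree \<Rightarrow> nat" where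
  "root_label (WNode k ch) = k"

definition iface_of :: "iface list \<Rightarrow> nat \<Rightarrow> iface option" where
  "iface_of Li n = find (\<lambda>I. iname I = n) Li"

definition comp_of :: "component list \<Rightarrow> nat \<Rightarrow> component option" where
  "comp_of Lc k = find (\<lambda>C. cname C = k) Lc"

definition init_call :: "nat list \<Rightarrow> nat list \<Rightarrow> state" where
  "init_call ps vs = ((\<lambda>x. case map_of (zip ps vs) x of Some v \<Rightarrow> v | None \<Rightarrow> 0), (\<lambda>_ _. 0))"

definition setvar :: "state \<Rightarrow> nat \<Rightarrow> nat \<Rightarrow> state" where
  "setvar s x v = ((fst s)(x := v), snd s)"

definition setarr :: "state \<Rightarrow> nat \<Rightarrow> nat \<Rightarrow> nat \<Rightarrow> state" where
  "setarr s x i v = (fst s, (snd s)(x := (snd s x)(i := v)))"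

text \<open>Big-step semantics with output trace and step count.
exec L ch c s s' os n: in component library L, executing command c in a component
copy whose required interfaces are wired to the subtrees ch, from state s,
terminates in state s' producing outputs os in n steps.\<close>
inductive exec :: "component list \<Rightarrow> (nat \<times> wtree) list \<Rightarrow> com \<Rightarrow> state \<Rightarrow> state
    \<Rightarrow> nat list \<Rightarrow> nat \<Rightarrow> bool" for L where
  Skip: "exec L ch Skip s s [] 1"
| Assign: "exec L ch (Assign x a) s (setvar s x (aval a s)) [] 1"
| ArrAssign: "exec L ch (ArrAssign x i a) s (setarr s x (aval i s) (aval a s)) [] 1"
| Seq: "exec L ch c1 s s1 o1 n1 \<Longrightarrow> exec L ch c2 s1 s2 o2 n2
    \<Longrightarrow> exec L ch (Seq c1 c2) s s2 (o1 @ o2) (n1 + n2 + 1)"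
| IfT: "bval b s \<Longrightarrow> exec L ch c1 s s' os n \<Longrightarrow> exec L ch (If b c1 c2) s s' os (n + 1)"
| IfF: "\<not> bval b s \<Longrightarrow> exec L ch c2 s s' os n \<Longrightarrow> exec L ch (If b c1 c2) s s' os (n + 1)"
| WhileF: "\<not> bval b s \<Longrightarrow> exec L ch (While b c) s s [] 1"
| WhileT: "bval b s \<Longrightarrow> exec L ch c s s1 o1 n1 \<Longrightarrow> exec L ch (While b c) s1 s2 o2 n2
    \<Longrightarrow> exec L ch (While b c) s s2 (o1 @ o2) (n1 + n2 + 1)"
| Out: "exec L ch (Out a) s s [aval a s] 1"
| Call: "map_of ch I = Some (WNode k ch') \<Longrightarrow> comp_of L k = Some C
    \<Longrightarrow> map_of (code C) (I, f) = Some (ps, body, r) \<Longrightarrow> length ps = length args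
    \<Longrightarrow> exec L ch' body (init_call ps (map (\<lambda>a. aval a s) args)) s1 os n
    \<Longrightarrow> exec L ch (Call x I f args) s (setvar s x (aval r s1)) os (n + 1)"

fun calls :: "com \<Rightarrow> (nat \<times> nat \<times> nat) list" where
  "calls (Call x I f args) = [(I, f, length args)]"
| "calls (Seq c1 c2) = calls c1 @ calls c2"
| "calls (If b c1 c2) = calls c1 @ calls c2"
| "calls (While b c) = calls c"
| "calls _ = []"

definition wf_iface :: "iface \<Rightarrow> bool" where
  "wf_iface I \<longleftrightarrow> distinct (map fst (protos I)) \<and> distinct (map fst (tfields I))"

definition wf_comp :: "iface list \<Rightarrow> component \<Rightarrow> bool" where
  "wf_comp Li C \<longleftrightarrow>
     prov C \<noteq> [] \<and> distinct (prov C) \<and> distinct (req C)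
   \<and> set (prov C) \<union> set (req C) \<subseteq> iname ` set Li
   \<and> distinct (map fst (code C))
   \<and> (\<forall>I \<in> set (prov C). \<forall>D. iface_of Li I = Some D \<longrightarrow>
        (\<forall>(f, rt, pts) \<in> set (protos D). \<exists>ps b r.
           map_of (code C) (I, f) = Some (ps, b, r) \<and> length ps = length pts \<and> distinct ps))
   \<and> (\<forall>((I, f), (ps, b, r)) \<in> set (code C).
        I \<in> set (prov C) \<and> (\<exists>D. iface_of Li I = Some D \<and> f \<in> fst ` set (protos D))
      \<and> (\<forall>(J, g, m) \<in> set (calls b). J \<in> set (req C) \<and>
           (\<exists>D. iface_of Li J = Some D \<and> (\<exists>rt pts. (g, rt, pts) \<in> set (protos D) \<and> length pts = m))))"

definition wf_libs :: "iface list \<Rightarrow> component list \<Rightarrow> bool" where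
  "wf_libs Li Lc \<longleftrightarrow> distinct (map iname Li) \<and> (\<forall>I \<in> set Li. wf_iface I)
     \<and> distinct (map cname Lc) \<and> (\<forall>C \<in> set Lc. wf_comp Li C)"

definition main_fn :: nat where "main_fn = 0"

text \<open>Component c of Lc implements main (in exactly one of its provided
interfaces), taking one argument per Boolean variable.\<close>
definition main_ok :: "iface list \<Rightarrow> component list \<Rightarrow> nat \<Rightarrow> nat \<Rightarrow> bool" where
  "main_ok Li Lc c nX \<longleftrightarrow> (\<exists>C. comp_of Lc c = Some C \<and>
     (\<exists>!I. I \<in> set (prov C) \<and> (\<exists>D. iface_of Li I = Some D \<and> main_fn \<in> fst ` set (protos D))) \<and>
     (\<forall>I \<in> set (prov C). \<forall>D. iface_of Li I = Some D \<longrightarrow>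
        (\<forall>rt pts. (main_fn, rt, pts) \<in> set (protos D) \<longrightarrow> length pts = nX)))"

text \<open>wired Lc p t: every vertex of t is labelled by a component of Lc whose
required interfaces are exactly the arc labels to its children (in order), each child
provides the interface labelling its arc, and no component label repeats on a path
(p is the list of labels strictly above the root of t).\<close>
inductive wired :: "component list \<Rightarrow> nat list \<Rightarrow> wtree \<Rightarrow> bool" for Lc where
  "k \<notin> set p \<Longrightarrow> comp_of Lc k = Some C \<Longrightarrow> map fst ch = req C \<Longrightarrow>
   (\<forall>J t'. (J, t') \<in> set ch \<longrightarrow> wired Lc (k # p) t' \<and>
      (\<exists>C'. comp_of Lc (root_label t') = Some C' \<and> J \<in> set (prov C'))) \<Longrightarrow>
   wired Lc p (WNode k ch)"

definition valid_sys :: "component list \<Rightarrow> nat \<Rightarrow> wtree \<Rightarrow> bool" where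
  "valid_sys Lc c t \<longleftrightarrow> wired Lc [] t \<and> root_label t = c"

definition run :: "component list \<Rightarrow> wtree \<Rightarrow> bool list \<Rightarrow> nat list \<Rightarrow> bool" where
  "run Lc t i os \<longleftrightarrow> (\<exists>k ch C I ps body r s' n. t = WNode k ch \<and> comp_of Lc k = Some C \<and>
     I \<in> set (prov C) \<and> map_of (code C) (I, main_fn) = Some (ps, body, r) \<and>
     length ps = length i \<and>
     exec Lc ch body (init_call ps (map of_bool i)) s' os n)"

definition working :: "component list \<Rightarrow> (bool list \<times> nat) list \<Rightarrow> wtree \<Rightarrow> bool" where
  "working Lc R t \<longleftrightarrow> (\<forall>(i, out) \<in> set R. run Lc t i [out])"

text \<open>Rew_#comp: the number of component copies (vertices) in the system.\<close>
fun ncomp :: "wtree \<Rightarrow> nat" where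
  "ncomp (WNode k ch) = 1 + sum_list (map (\<lambda>(J, t). ncomp t) ch)"

fun enc_aexp :: "aexp \<Rightarrow> nat" where
  "enc_aexp (N n) = prod_encode (0, n)"
| "enc_aexp (V x) = prod_encode (1, x)"
| "enc_aexp (Plus a b) = prod_encode (2, prod_encode (enc_aexp a, enc_aexp b))"
| "enc_aexp (Minus a b) = prod_encode (3, prod_encode (enc_aexp a, enc_aexp b))"
| "enc_aexp (Times a b) = prod_encode (4, prod_encode (enc_aexp a, enc_aexp b))"
| "enc_aexp (Div a b) = prod_encode (5, prod_encode (enc_aexp a, enc_aexp b))"
| "enc_aexp (Mod a b) = prod_encode (6, prod_encode (enc_aexp a, enc_aexp b))"
| "enc_aexp (Arr x i) = prod_encode (7, prod_encode (x, enc_aexp i))"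

fun enc_bexp :: "bexp \<Rightarrow> nat" where
  "enc_bexp (BC b) = prod_encode (0, of_bool b)"
| "enc_bexp (Not b) = prod_encode (1, enc_bexp b)"
| "enc_bexp (And a b) = prod_encode (2, prod_encode (enc_bexp a, enc_bexp b))"
| "enc_bexp (Less a b) = prod_encode (3, prod_encode (enc_aexp a, enc_aexp b))"
| "enc_bexp (Eq a b) = prod_encode (4, prod_encode (enc_aexp a, enc_aexp b))"

fun enc_com :: "com \<Rightarrow> nat" where
  "enc_com Skip = prod_encode (0, 0)"
| "enc_com (Assign x a) = prod_encode (1, prod_encode (x, enc_aexp a))"
| "enc_com (ArrAssign x i a) = prod_encode (2, list_encode [x, enc_aexp i, enc_aexp a])"
| "enc_com (Seq c1 c2) = prod_encode (3, prod_encode (enc_com c1, enc_com c2))"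
| "enc_com (If b c1 c2) = prod_encode (4, list_encode [enc_bexp b, enc_com c1, enc_com c2])"
| "enc_com (While b c) = prod_encode (5, prod_encode (enc_bexp b, enc_com c))"
| "enc_com (Call x I f args) = prod_encode (6, list_encode [x, I, f, list_encode (map enc_aexp args)])"
| "enc_com (Out a) = prod_encode (7, enc_aexp a)"

definition enc_iface :: "iface \<Rightarrow> nat" where
  "enc_iface I = list_encode [iname I,
     list_encode (map (\<lambda>(f, rt, pts). list_encode [f, rt, list_encode pts]) (protos I)),
     list_encode (map prod_encode (tfields I))]"

definition enc_component :: "component \<Rightarrow> nat" where
  "enc_component C = list_encode [cname C, list_encode (prov C), list_encode (req C),
     list_encode (map (\<lambda>((I, f), (ps, b, r)).
        list_encode [I, f, list_encode ps, enc_com b, enc_aexp r]) (code C))]"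

fun enc_tree :: "wtree \<Rightarrow> nat" where
  "enc_tree (WNode k ch) = prod_encode (k, list_encode (map (\<lambda>(J, t). prod_encode (J, enc_tree t)) ch))"

definition enc_reqs :: "(bool list \<times> nat) list \<Rightarrow> nat" where
  "enc_reqs R = list_encode (map (\<lambda>(i, out). prod_encode (list_encode (map of_bool i), out)) R)"

text \<open>An algorithm is a program of the (Turing-complete) language above that makes no
interface calls: it gets its input in variable 0 and delivers its output in variable 1.\<close>
definition alg_init :: "nat \<Rightarrow> state" where
  "alg_init x = ((\<lambda>_. 0)(0 := x), (\<lambda>_ _. 0))"

definition alg_runs :: "com \<Rightarrow> nat \<Rightarrow> nat \<Rightarrow> nat \<Rightarrow> bool" where
  "alg_runs p x y n \<longleftrightarrow> (\<exists>s' os. exec [] [] p (alg_init x) s' os n \<and> fst s' 1 = y)"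

text \<open>Env maps a system to a list of event/metric values; p computes Env in time
polynomial in the size of the system.\<close>
definition env_computes_poly :: "com \<Rightarrow> (wtree \<Rightarrow> nat list) \<Rightarrow> bool" where
  "env_computes_poly p Env \<longleftrightarrow> (\<exists>a d. \<forall>t. \<exists>n.
      alg_runs p (enc_tree t) (list_encode (Env t)) n \<and> n \<le> a * (size t + 1) ^ d)"

definition env_polytime :: "(wtree \<Rightarrow> nat list) \<Rightarrow> bool" where
  "env_polytime Env \<longleftrightarrow> (\<exists>p. env_computes_poly p Env)"

section \<open>The problem ESAdapt under Rew_#comp\<close>

text \<open>An instance: number |X| of Boolean variables, requirements R, L_int, L_comp,
base component c, the given system S, and a program computing Env.\<close>
datatype es_instance = Inst (nX: nat) (reqs: "(bool list \<times> nat) list") (lint: "iface list")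
  (lcomp: "component list") (base: nat) (sys: wtree) (envp: com)

definition enc_inst :: "es_instance \<Rightarrow> nat" where
  "enc_inst x = list_encode [nX x, enc_reqs (reqs x), list_encode (map enc_iface (lint x)),
     list_encode (map enc_component (lcomp x)), base x, enc_tree (sys x), enc_com (envp x)]"

definition valid_inst :: "(wtree \<Rightarrow> nat list) \<Rightarrow> es_instance \<Rightarrow> bool" where
  "valid_inst Env x \<longleftrightarrow> wf_libs (lint x) (lcomp x) \<and> main_ok (lint x) (lcomp x) (base x) (nX x)
     \<and> (\<forall>(i, out) \<in> set (reqs x). length i = nX x)
     \<and> valid_sys (lcomp x) (base x) (sys x) \<and> working (lcomp x) (reqs x) (sys x)
     \<and> env_computes_poly (envp x) Env"

text \<open>Correct outputs: working systems based on c with minimum Rew_#comp.\<close>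
definition optimal_ncomp :: "es_instance \<Rightarrow> wtree \<Rightarrow> bool" where
  "optimal_ncomp x t \<longleftrightarrow> valid_sys (lcomp x) (base x) t \<and> working (lcomp x) (reqs x) t \<and>
     (\<forall>t'. valid_sys (lcomp x) (base x) t' \<and> working (lcomp x) (reqs x) t' \<longrightarrow> ncomp t \<le> ncomp t')"

definition ESAdapt_ncomp_solvable :: "(wtree \<Rightarrow> nat list) \<Rightarrow> bool" where
  "ESAdapt_ncomp_solvable Env \<longleftrightarrow> (\<exists>p. \<forall>x. valid_inst Env x \<longrightarrow>
     (\<exists>n t. alg_runs p (enc_inst x) (enc_tree t) n \<and> optimal_ncomp x t))"

end

theory Submission
  imports Defs
begin

text \<open>A diagonal argument. Given a supposed algorithm p (and any program pe computing Env),
build an instance whose base component must be wired either to a chain of two trivial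
components (a working system with three components) or to a single component D (a system with
two components). The code of D is a quine: it reconstructs the encoding of the very instance
it belongs to, runs p on it, and loops forever exactly when p answers with the two-component
system. Hence the optimum is the two-component system exactly when p does not return it, so
p errs on this instance.\<close>

definition prod_encode_exp :: "aexp \<Rightarrow> aexp \<Rightarrow> aexp" where
  "prod_encode_exp a b = Plus (Div (Times (Plus a b) (Plus (Plus a b) (N 1))) (N 2)) a"

lemma aval_prod_encode_exp [simp]:
  "aval (prod_encode_exp a b) s = prod_encode (aval a s, aval b s)"
  by (simp add: prod_encode_exp_def prod_encode_def triangle_def)

fun list_encode_exp :: "aexp list \<Rightarrow> aexp" where
  "list_encode_exp [] = N 0"
| "list_encode_exp (a # as) = Plus (prod_encode_exp a (list_encode_exp as)) (N 1)"

lemma aval_list_encode_exp [simp]: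
  "aval (list_encode_exp as) s = list_encode (map (\<lambda>a. aval a s) as)"
  by (induction as) auto

text \<open>Kleene's trick: quote_self c stores the code of c in variable 0 before running c,
so c can compute the encoding of quote_self c itself with quote_self_enc_exp.\<close>

definition quote_self :: "com \<Rightarrow> com" where
  "quote_self c = Seq (Assign 0 (N (enc_com c))) c"

definition quote_self_enc_exp :: aexp where
  "quote_self_enc_exp = prod_encode_exp (N 3)
     (prod_encode_exp
       (prod_encode_exp (N 1) (prod_encode_exp (N 0) (prod_encode_exp (N 0) (V 0)))) (V 0))"

lemma aval_quote_self_enc_exp:
  "fst s 0 = enc_com c \<Longrightarrow> aval quote_self_enc_exp s = enc_com (quote_self c)"
  by (simp add: quote_self_enc_exp_def quote_self_def)

inductive_cases SeqE: "exec L ch (Seq c1 c2) s s' os n"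
inductive_cases AssignE: "exec L ch (Assign x a) s s' os n"
inductive_cases IfE: "exec L ch (If b c1 c2) s s' os n"
inductive_cases CallE: "exec L ch (Call x I f args) s s' os n"
inductive_cases SkipE: "exec L ch Skip s s' os n"
inductive_cases OutE: "exec L ch (Out a) s s' os n"

lemma exec_deterministic:
  "exec L ch c s s1 os1 n1 \<Longrightarrow> exec L ch c s s2 os2 n2 \<Longrightarrow>
   s1 = s2 \<and> os1 = os2 \<and> n1 = n2"
proof (induction arbitrary: s2 os2 n2 rule: exec.induct)
  case Seq
  from Seq.prems show ?case by (rule SeqE) (use Seq.IH in fastforce)
next
  case WhileT
  from WhileT.prems show ?case by (cases rule: exec.cases) (use WhileT in fastforce)+
next
  case Call
  from Call.prems show ?case by (rule CallE) (use Call in fastforce)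
qed (erule exec.cases; fastforce)+

lemma exec_While_True_diverges: "\<not> exec L ch (While (BC True) c) s s' os n"
proof
  assume "exec L ch (While (BC True) c) s s' os n"
  then show False
    by (induction "While (BC True) c" s s' os n rule: exec.induct) auto
qed

lemma exec_Seq_Assign_iff:
  "(\<exists>n. exec L ch (Seq (Assign x a) c) s s' os n) \<longleftrightarrow>
   (\<exists>n. exec L ch c (setvar s x (aval a s)) s' os n)"
proof
  assume "\<exists>n. exec L ch c (setvar s x (aval a s)) s' os n"
  then obtain n where "exec L ch c (setvar s x (aval a s)) s' os n" ..
  from exec.Seq[OF exec.Assign this] show "\<exists>n. exec L ch (Seq (Assign x a) c) s s' os n"
    by auto
qed (auto elim!: SeqE AssignE)

definition diverge_if :: "bexp \<Rightarrow> com" where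
  "diverge_if b = If b (While (BC True) Skip) Skip"

lemma exec_Seq_diverge_if_iff:
  "(\<exists>n. exec L ch (Seq c (diverge_if b)) s s' os n) \<longleftrightarrow>
   (\<exists>n. exec L ch c s s' os n \<and> \<not> bval b s')"
proof
  assume "\<exists>n. exec L ch (Seq c (diverge_if b)) s s' os n"
  then show "\<exists>n. exec L ch c s s' os n \<and> \<not> bval b s'"
    unfolding diverge_if_def
    by (auto elim!: SeqE IfE SkipE simp: exec_While_True_diverges)
next
  assume "\<exists>n. exec L ch c s s' os n \<and> \<not> bval b s'"
  then obtain n where c: "exec L ch c s s' os n" and b: "\<not> bval b s'" by blast
  have "exec L ch (diverge_if b) s' s' [] 2"
    unfolding diverge_if_def using exec.IfF[OF b exec.Skip] by (simp add: numeral_2_eq_2)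
  from exec.Seq[OF c this] show "\<exists>n. exec L ch (Seq c (diverge_if b)) s s' os n" by auto
qed

text \<open>An algorithm runs without wiring, so it never executes a call; erasing its calls and
outputs lets a component run it silently.\<close>

fun strip_io :: "com \<Rightarrow> com" where
  "strip_io (Seq c1 c2) = Seq (strip_io c1) (strip_io c2)"
| "strip_io (If b c1 c2) = If b (strip_io c1) (strip_io c2)"
| "strip_io (While b c) = While b (strip_io c)"
| "strip_io (Out a) = Skip"
| "strip_io (Call x I f args) = Skip"
| "strip_io c = c"

lemma calls_strip_io [simp]: "calls (strip_io c) = []"
  by (induction c) auto

lemma exec_strip_io: "exec L [] c s s' os n \<Longrightarrow> exec L' ch (strip_io c) s s' [] n"
proof (induction "[] :: (nat \<times> wtree) list" c s s' os n rule: exec.induct)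
  case (Seq c1 s s1 o1 n1 c2 s2 o2 n2)
  then show ?case using exec.Seq[of L' ch "strip_io c1" s s1 "[]" n1] by simp
next
  case (WhileT b s c s1 o1 n1 s2 o2 n2)
  then show ?case using exec.WhileT[of b s L' ch "strip_io c" s1 "[]" n1] by simp
qed (auto intro: exec.intros[simplified])

section \<open>The diagonal instance\<close>

definition diag_ifaces :: "iface list" where
  "diag_ifaces = [Iface 0 [(0, 0, [])] [], Iface 1 [(1, 0, [])] [], Iface 2 [(1, 0, [])] []]"

definition base_comp :: component where
  "base_comp = Comp 0 [0] [1] [((0, 0), ([], Seq (Call 5 1 1 []) (Out (N 0)), N 0))]"

definition relay_comp :: component where
  "relay_comp = Comp 1 [1] [2] [((1, 1), ([], Skip, N 0))]"

definition leaf_comp :: component where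
  "leaf_comp = Comp 3 [2] [] [((2, 1), ([], Skip, N 0))]"

definition diag_reqs :: "(bool list \<times> nat) list" where
  "diag_reqs = [([], 0)]"

definition long_sys :: wtree where
  "long_sys = WNode 0 [(1, WNode 1 [(2, WNode 3 [])])]"

definition short_sys :: wtree where
  "short_sys = WNode 0 [(1, WNode 2 [])]"

text \<open>The encoding of diag_comp p pe, whose code is read off variable 0 instead of being
quoted, which would be circular.\<close>

definition diag_comp_enc_exp :: aexp where
  "diag_comp_enc_exp = list_encode_exp [N 2, N (list_encode [1]), N (list_encode []),
     list_encode_exp [list_encode_exp
       [N 1, N 1, N (list_encode []), quote_self_enc_exp, N (enc_aexp (N 0))]]]"

definition inst_exp :: "com \<Rightarrow> aexp" where
  "inst_exp pe = list_encode_exp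
    [N 0, N (enc_reqs diag_reqs), N (list_encode (map enc_iface diag_ifaces)),
     list_encode_exp [N (enc_component base_comp), N (enc_component relay_comp), diag_comp_enc_exp,
       N (enc_component leaf_comp)],
     N 0, N (enc_tree long_sys), N (enc_com pe)]"

definition diag_prog :: "com \<Rightarrow> com \<Rightarrow> com" where
  "diag_prog p pe = Seq (Assign 0 (inst_exp pe))
     (Seq (strip_io p) (diverge_if (Eq (V 1) (N (enc_tree short_sys)))))"

definition diag_body :: "com \<Rightarrow> com \<Rightarrow> com" where
  "diag_body p pe = quote_self (diag_prog p pe)"

definition diag_comp :: "com \<Rightarrow> com \<Rightarrow> component" where
  "diag_comp p pe = Comp 2 [1] [] [((1, 1), ([], diag_body p pe, N 0))]"

definition diag_comps :: "com \<Rightarrow> com \<Rightarrow> component list" where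
  "diag_comps p pe = [base_comp, relay_comp, diag_comp p pe, leaf_comp]"

definition diag_inst :: "com \<Rightarrow> com \<Rightarrow> es_instance" where
  "diag_inst p pe = Inst 0 diag_reqs diag_ifaces (diag_comps p pe) 0 long_sys pe"

lemma aval_inst_exp:
  assumes "fst s 0 = enc_com (diag_prog p pe)"
  shows "aval (inst_exp pe) s = enc_inst (diag_inst p pe)"
proof -
  have "aval diag_comp_enc_exp s = enc_component (diag_comp p pe)"
    using aval_quote_self_enc_exp[OF assms]
    by (simp add: diag_comp_enc_exp_def diag_comp_def diag_body_def enc_component_def)
  then show ?thesis
    by (simp add: inst_exp_def diag_inst_def diag_comps_def enc_inst_def)
qed

lemma diag_body_halts_iff:
  "(\<exists>s' n. exec L ch (diag_body p pe) (init_call [] []) s' os n) \<longleftrightarrow>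
   (\<exists>s' n. exec L ch (strip_io p) (alg_init (enc_inst (diag_inst p pe))) s' os n
      \<and> fst s' 1 \<noteq> enc_tree short_sys)"
proof -
  let ?s = "setvar (init_call [] []) 0 (enc_com (diag_prog p pe))"
  have "setvar ?s 0 (aval (inst_exp pe) ?s) = alg_init (enc_inst (diag_inst p pe))"
    using aval_inst_exp[of ?s p pe] by (simp add: setvar_def init_call_def alg_init_def)
  then show ?thesis
    unfolding diag_body_def quote_self_def diag_prog_def
    by (subst (1 2) ex_comm) (simp add: exec_Seq_Assign_iff exec_Seq_diverge_if_iff)
qed

lemma wf_libs_diag: "wf_libs diag_ifaces (diag_comps p pe)"
proof -
  have [simp]: "iname ` set diag_ifaces = {0, 1, 2}" by (simp add: diag_ifaces_def)
  have [simp]: "calls (diag_body p pe) = []"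
    by (simp add: diag_body_def quote_self_def diag_prog_def diverge_if_def)
  show ?thesis
    unfolding wf_libs_def wf_comp_def wf_iface_def
    by (simp add: diag_comps_def diag_ifaces_def iface_of_def main_fn_def
        base_comp_def relay_comp_def diag_comp_def leaf_comp_def)
qed

lemma main_ok_diag: "main_ok diag_ifaces (diag_comps p pe) 0 0"
  by (auto simp: main_ok_def comp_of_def iface_of_def diag_comps_def diag_ifaces_def
      base_comp_def main_fn_def)

lemma comp_of_diag_comps:
  "comp_of (diag_comps p pe) k = Some C \<longleftrightarrow>
   k = 0 \<and> C = base_comp \<or> k = 1 \<and> C = relay_comp \<or>
   k = 2 \<and> C = diag_comp p pe \<or> k = 3 \<and> C = leaf_comp"
  by (auto simp: comp_of_def diag_comps_def
      base_comp_def relay_comp_def diag_comp_def leaf_comp_def)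

lemma wired_provider_of_iface_2:
  assumes "wired (diag_comps p pe) q t"
    and "comp_of (diag_comps p pe) (root_label t) = Some C" and "2 \<in> set (prov C)"
  shows "t = WNode 3 []"
  using assms
  by (cases rule: wired.cases)
    (auto simp: comp_of_diag_comps base_comp_def relay_comp_def diag_comp_def leaf_comp_def)

lemma wired_provider_of_iface_1:
  assumes "wired (diag_comps p pe) q t"
    and "comp_of (diag_comps p pe) (root_label t) = Some C" and "1 \<in> set (prov C)"
  shows "t = WNode 1 [(2, WNode 3 [])] \<or> t = WNode 2 []"
  using assms(1)
proof (cases rule: wired.cases)
  case (1 k C' ch)
  with assms(2,3) have "k = 1 \<and> C' = relay_comp \<or> k = 2 \<and> C' = diag_comp p pe"
    by (auto simp: comp_of_diag_comps base_comp_def leaf_comp_def)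
  then show ?thesis
  proof
    assume k: "k = 1 \<and> C' = relay_comp"
    with 1 obtain t' where ch: "ch = [(2, t')]" by (auto simp: relay_comp_def map_eq_Cons_conv)
    with 1 have "wired (diag_comps p pe) (k # q) t'"
      and "\<exists>C''. comp_of (diag_comps p pe) (root_label t') = Some C'' \<and> 2 \<in> set (prov C'')"
      by auto
    then have "t' = WNode 3 []" using wired_provider_of_iface_2 by blast
    with 1 k ch show ?thesis by simp
  qed (use 1 in \<open>simp add: diag_comp_def\<close>)
qed

lemma valid_long_sys: "valid_sys (diag_comps p pe) 0 long_sys"
proof -
  have "wired (diag_comps p pe) [1, 0] (WNode 3 [])"
    by (rule wired.intros[where C = leaf_comp]) (auto simp: comp_of_diag_comps leaf_comp_def)
  then have "wired (diag_comps p pe) [0] (WNode 1 [(2, WNode 3 [])])"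
    by (intro wired.intros[where C = relay_comp])
      (auto simp: comp_of_diag_comps relay_comp_def leaf_comp_def)
  then show ?thesis
    unfolding valid_sys_def long_sys_def
    by (auto intro!: wired.intros[where C = base_comp]
        simp: comp_of_diag_comps base_comp_def relay_comp_def)
qed

lemma valid_short_sys: "valid_sys (diag_comps p pe) 0 short_sys"
proof -
  have "wired (diag_comps p pe) [0] (WNode 2 [])"
    by (rule wired.intros[where C = "diag_comp p pe"]) (auto simp: comp_of_diag_comps diag_comp_def)
  then show ?thesis
    unfolding valid_sys_def short_sys_def
    by (auto intro!: wired.intros[where C = base_comp]
        simp: comp_of_diag_comps base_comp_def diag_comp_def)
qed

lemma valid_sys_diag_iff:
  "valid_sys (diag_comps p pe) 0 t \<longleftrightarrow> t = long_sys \<or> t = short_sys"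
proof
  assume "valid_sys (diag_comps p pe) 0 t"
  then have "wired (diag_comps p pe) [] t" and "root_label t = 0" by (simp_all add: valid_sys_def)
  then show "t = long_sys \<or> t = short_sys"
  proof (cases rule: wired.cases)
    case (1 k C ch)
    with \<open>root_label t = 0\<close> obtain t' where ch: "ch = [(1, t')]"
      by (auto simp: comp_of_diag_comps base_comp_def map_eq_Cons_conv)
    with 1 have "wired (diag_comps p pe) [k] t'"
      and "\<exists>C'. comp_of (diag_comps p pe) (root_label t') = Some C' \<and> 1 \<in> set (prov C')"
      by auto
    then have "t' = WNode 1 [(2, WNode 3 [])] \<or> t' = WNode 2 []" using wired_provider_of_iface_1 by blast
    with 1 \<open>root_label t = 0\<close> ch show ?thesis
      by (auto simp: long_sys_def short_sys_def)
  qed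
qed (auto intro: valid_long_sys valid_short_sys)

lemma working_base_comp_iff:
  assumes base: "comp_of L 0 = Some base_comp"
    and child: "comp_of L k = Some C" "map_of (code C) (1, 1) = Some ([], body, r)"
  shows "working L diag_reqs (WNode 0 [(1, WNode k ch)]) \<longleftrightarrow>
    (\<exists>s' n. exec L ch body (init_call [] []) s' [] n)"
proof
  assume "working L diag_reqs (WNode 0 [(1, WNode k ch)])"
  then obtain s' n where
    "exec L [(1, WNode k ch)] (Seq (Call 5 1 1 []) (Out (N 0))) (init_call [] []) s' [0] n"
    by (auto simp: working_def diag_reqs_def run_def base base_comp_def main_fn_def)
  then obtain s1 os n1 where "exec L ch body (init_call [] []) s1 os n1" and "os @ [0] = [0]"
    using child by (auto elim!: SeqE CallE OutE)
  then show "\<exists>s' n. exec L ch body (init_call [] []) s' [] n" by (metis append_self_conv2)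
next
  assume "\<exists>s' n. exec L ch body (init_call [] []) s' [] n"
  then obtain s1 n where body: "exec L ch body (init_call [] []) s1 [] n" by blast
  let ?s = "setvar (init_call [] []) 5 (aval r s1)"
  have "exec L [(1, WNode k ch)] (Call 5 1 1 []) (init_call [] []) ?s [] (n + 1)"
    using exec.Call[of "[(1, WNode k ch)]" 1 k ch L C 1 "[]" body r "[]"] child body by simp
  from exec.Seq[OF this exec.Out[of L _ "N 0"]]
  have "exec L [(1, WNode k ch)] (Seq (Call 5 1 1 []) (Out (N 0))) (init_call [] []) ?s [0]
      (n + 1 + 1 + 1)"
    by simp
  then show "working L diag_reqs (WNode 0 [(1, WNode k ch)])"
    by (auto simp: working_def diag_reqs_def run_def base base_comp_def main_fn_def
        simp del: split_paired_Ex)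
qed

lemma working_long_sys: "working (diag_comps p pe) diag_reqs long_sys"
proof -
  have "\<exists>s' n. exec (diag_comps p pe) [(2, WNode 3 [])] Skip (init_call [] []) s' [] n"
    using exec.Skip by blast
  then show ?thesis
    unfolding long_sys_def
    by (subst working_base_comp_iff[where C = relay_comp])
      (auto simp: comp_of_diag_comps relay_comp_def)
qed

lemma working_short_sys_iff:
  assumes "exec [] [] p (alg_init (enc_inst (diag_inst p pe))) s' os n"
  shows "working (diag_comps p pe) diag_reqs short_sys \<longleftrightarrow> fst s' 1 \<noteq> enc_tree short_sys"
proof -
  let ?L = "diag_comps p pe"
  have strip: "exec ?L [] (strip_io p) (alg_init (enc_inst (diag_inst p pe))) s' [] n"
    using exec_strip_io[OF assms] .
  have "working ?L diag_reqs short_sys \<longleftrightarrow>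
      (\<exists>s1 n1. exec ?L [] (diag_body p pe) (init_call [] []) s1 [] n1)"
    unfolding short_sys_def
    by (rule working_base_comp_iff) (auto simp: comp_of_diag_comps diag_comp_def)
  also have "\<dots> \<longleftrightarrow> fst s' 1 \<noteq> enc_tree short_sys"
    unfolding diag_body_halts_iff using strip exec_deterministic[OF strip] by blast
  finally show ?thesis .
qed

lemma optimal_diag_inst_iff:
  "optimal_ncomp (diag_inst p pe) t \<longleftrightarrow>
   t = (if working (diag_comps p pe) diag_reqs short_sys then short_sys else long_sys)"
  using working_long_sys[of p pe]
  by (auto simp: optimal_ncomp_def diag_inst_def valid_sys_diag_iff long_sys_def short_sys_def)

lemma valid_diag_inst: "env_computes_poly pe Env \<Longrightarrow> valid_inst Env (diag_inst p pe)"
  using working_long_sys[of p pe]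
  by (simp add: valid_inst_def diag_inst_def wf_libs_diag main_ok_diag valid_long_sys
      diag_reqs_def)

theorem mainTheorem15:
  fixes Env :: "wtree \<Rightarrow> nat list"
  assumes "env_polytime Env"
  shows "\<not> ESAdapt_ncomp_solvable Env"
proof
  assume "ESAdapt_ncomp_solvable Env"
  then obtain p where solves: "\<forall>x. valid_inst Env x \<longrightarrow>
      (\<exists>n t. alg_runs p (enc_inst x) (enc_tree t) n \<and> optimal_ncomp x t)"
    unfolding ESAdapt_ncomp_solvable_def by blast
  from assms obtain pe where "env_computes_poly pe Env" unfolding env_polytime_def by blast
  with solves obtain n t where "alg_runs p (enc_inst (diag_inst p pe)) (enc_tree t) n"
    and opt: "optimal_ncomp (diag_inst p pe) t"
    using valid_diag_inst by blast
  then obtain s' os where run: "exec [] [] p (alg_init (enc_inst (diag_inst p pe))) s' os n"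
    and out: "fst s' 1 = enc_tree t"
    unfolding alg_runs_def by blast
  have "enc_tree long_sys \<noteq> enc_tree short_sys"
    by (simp add: long_sys_def short_sys_def list_encode_eq)
  with opt out show False
    unfolding optimal_diag_inst_iff working_short_sys_iff[OF run] by (auto split: if_splits)
qed

end
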